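(* Let $d\ge2$ and $m\in\mathbb R$, and set $\theta=\frac m4(d-1)$. For every smooth $f$ on $\mathbb R_+^d$ and every $x=(x_1,\dots,x_{d-1})$ with $x_i\ge0$, $\sum_{j=1}^{d-1}x_j\le1$, setting $x_d=1-\sum_{j=1}^{d-1}x_j$ and $g(x_1,\dots,x_{d-1})=f(x_1,\dots,x_{d-1},1-\sum_{j=1}^{d-1}x_j)$, one has $\mathscr L_d^{BEP(m)}f(x_1,\dots,x_{d-1},x_d)=\mathscr L^{WF}_{d,\theta}g(x_1,\dots,x_{d-1})$. That is, the Brownian Energy process with parameter $m$ on the complete graph with $d$ vertices started with $\sum_{i=1}^dx_i=1$ coincides with the $d$-types Wright–Fisher diffusion with symmetric parent-independent mutation at rate $\theta=\frac m4(d-1)$.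
   Context: The Brownian Energy process BEP($m$) on the complete graph with $d$ vertices is the diffusion on $\mathbb R_+^d$ with generator $\mathscr L_d^{BEP(m)}f(y)=\frac12\sum_{1\le i<j\le d}y_iy_j(\partial_{y_i}-\partial_{y_j})^2f(y)-\frac m4\sum_{1\le i<j\le d}(y_i-y_j)(\partial_{y_i}-\partial_{y_j})f(y)$. The $d$-types Wright–Fisher model with symmetric parent-independent mutation at rate $\theta$ is the diffusion on the simplex $\{x\in\mathbb R^{d-1}: x_i\ge0,\ \sum_i x_i\le1\}$ with generator $\mathscr L^{WF}_{d,\theta}g(x)=\sum_{i=1}^{d-1}\frac12x_i(1-x_i)\partial^2_{x_i}g(x)-\sum_{1\le i<j\le d-1}x_ix_j\partial_{x_i}\partial_{x_j}g(x)+\frac{\theta}{d-1}\sum_{i=1}^{d-1}(1-dx_i)\partial_{x_i}g(x)$. *)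

theory Defs
  imports "HOL-Analysis.Analysis" "HOL-Library.Option_ord"
begin

definition pd :: "'n::finite \<Rightarrow> (real^'n \<Rightarrow> real) \<Rightarrow> real^'n \<Rightarrow> real" where
  "pd i F y = deriv (\<lambda>t. F (y + t *\<^sub>R axis i 1)) 0"

fun pds :: "'n::finite list \<Rightarrow> (real^'n \<Rightarrow> real) \<Rightarrow> real^'n \<Rightarrow> real" where
  "pds [] F = F"
| "pds (i # is) F = pd i (pds is F)"

definition smooth_on :: "(real^('n::finite)) set \<Rightarrow> (real^'n \<Rightarrow> real) \<Rightarrow> bool" where
  "smooth_on U F \<longleftrightarrow> open U \<and>
     (\<forall>is. continuous_on U (pds is F) \<and>
        (\<forall>i. \<forall>y\<in>U. (\<lambda>t. pds is F (y + t *\<^sub>R axis i 1)) differentiable (at 0)))"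

text \<open>Generator of BEP(m) on the complete graph with vertex set the finite linearly
  ordered type 'd (d = CARD('d)).\<close>
definition L_BEP :: "real \<Rightarrow> (real^('d::{finite,linorder}) \<Rightarrow> real) \<Rightarrow> real^('d::{finite,linorder}) \<Rightarrow> real" where
  "L_BEP m f y =
     (1/2) * (\<Sum>(i,j)\<in>{(i,j). i < j}. y$i * y$j *
        (pd i (pd i f) y - pd i (pd j f) y - pd j (pd i f) y + pd j (pd j f) y))
     - (m/4) * (\<Sum>(i,j)\<in>{(i,j). i < j}. (y$i - y$j) * (pd i f y - pd j f y))"

text \<open>Generator of the d-types Wright-Fisher diffusion with symmetric parent-independent
  mutation at rate theta, acting on functions of the d-1 = CARD('n) coordinates
  (so d = CARD('n) + 1).\<close>
definition L_WF :: "real \<Rightarrow> (real^('n::{finite,linorder}) \<Rightarrow> real) \<Rightarrow> real^('n::{finite,linorder}) \<Rightarrow> real" where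
  "L_WF \<theta> g x =
     (\<Sum>i\<in>UNIV. (1/2) * x$i * (1 - x$i) * pd i (pd i g) x)
     - (\<Sum>(i,j)\<in>{(i,j). i < j}. x$i * x$j * pd i (pd j g) x)
     + (\<theta> / real CARD('n)) * (\<Sum>i\<in>UNIV. (1 - (real CARD('n) + 1) * x$i) * pd i g x)"

text \<open>Embedding of (x_1,...,x_{d-1}) as (x_1,...,x_{d-1},1 - sum x_j); the extra
  coordinate x_d is indexed by None.\<close>
definition lift :: "real^('n::finite) \<Rightarrow> real^('n option)" where
  "lift x = (\<chi> k. case k of Some i \<Rightarrow> x$i | None \<Rightarrow> 1 - (\<Sum>j\<in>UNIV. x$j))"

end

theory Submission
  imports Defs
begin

text \<open>On the hyperplane \<open>y\<^sub>1 + \<dots> + y\<^sub>d = 1\<close> the Brownian energy generator equals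
  \<open>(1/2) (\<Sum>\<^sub>k y\<^sub>k \<partial>\<^sub>k \<partial>\<^sub>k f - \<Sum>\<^sub>k \<Sum>\<^sub>l y\<^sub>k y\<^sub>l \<partial>\<^sub>k \<partial>\<^sub>l f) + (m/4) (\<Sum>\<^sub>k \<partial>\<^sub>k f - d \<Sum>\<^sub>k y\<^sub>k \<partial>\<^sub>k f)\<close>,
  and by the chain rule \<open>\<partial>\<^sub>i g = (\<partial>\<^sub>i - \<partial>\<^sub>d) f\<close> and \<open>\<partial>\<^sub>i \<partial>\<^sub>j g = (\<partial>\<^sub>i - \<partial>\<^sub>d) (\<partial>\<^sub>j - \<partial>\<^sub>d) f\<close>.
  Writing every sum over the coordinates of \<open>y = lift x\<close> as
  \<open>\<Sum>\<^sub>k y\<^sub>k c\<^sub>k = c\<^sub>d + \<Sum>\<^sub>i x\<^sub>i (c\<^sub>i - c\<^sub>d)\<close> turns this into the Wright--Fisher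
  generator with \<open>\<theta>/(d - 1) = m/4\<close>. The computation needs the symmetry of the Hessian of \<open>f\<close>,
  which holds because both mixed partials are the limit of the same second difference quotient.\<close>

definition partially_differentiable_on :: "(real^'m::finite) set \<Rightarrow> (real^'m \<Rightarrow> real) \<Rightarrow> bool" where
  "partially_differentiable_on U F \<longleftrightarrow>
     (\<forall>i. \<forall>y\<in>U. (\<lambda>t. F (y + t *\<^sub>R axis i 1)) differentiable (at 0))"

lemma smooth_onD:
  assumes "smooth_on U F"
  shows "open U" "continuous_on U (pds is F)" "partially_differentiable_on U (pds is F)"
  using assms by (simp_all add: smooth_on_def partially_differentiable_on_def)

lemma dist_add_axes_le:
  fixes p :: "real^'m::finite"
  shows "dist (p + s *\<^sub>R axis a 1 + t *\<^sub>R axis b 1) p \<le> \<bar>s\<bar> + \<bar>t\<bar>"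
proof -
  have "dist (p + s *\<^sub>R axis a 1 + t *\<^sub>R axis b 1) p = norm (s *\<^sub>R axis a (1::real) + t *\<^sub>R axis b 1)"
    by (simp add: dist_norm)
  also have "\<dots> \<le> \<bar>s\<bar> + \<bar>t\<bar>"
    using norm_triangle_ineq[of "s *\<^sub>R axis a (1::real)" "t *\<^sub>R axis b 1"] by simp
  finally show ?thesis .
qed

lemma has_real_derivative_along_axis:
  fixes F :: "real^'m::finite \<Rightarrow> real"
  assumes "partially_differentiable_on U F" and "q + \<sigma> *\<^sub>R axis i 1 \<in> U"
  shows "((\<lambda>s. F (q + s *\<^sub>R axis i 1)) has_real_derivative pd i F (q + \<sigma> *\<^sub>R axis i 1)) (at \<sigma>)"
proof -
  have "((\<lambda>t. F ((q + \<sigma> *\<^sub>R axis i 1) + t *\<^sub>R axis i 1)) has_real_derivative pd i F (q + \<sigma> *\<^sub>R axis i 1)) (at 0)"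
    using assms unfolding pd_def partially_differentiable_on_def
    by (simp add: DERIV_deriv_iff_real_differentiable)
  moreover have "(\<lambda>t. F ((q + \<sigma> *\<^sub>R axis i 1) + t *\<^sub>R axis i 1)) = (\<lambda>t. F (q + (t + \<sigma>) *\<^sub>R axis i 1))"
    by (simp add: algebra_simps)
  ultimately show ?thesis
    using DERIV_shift[of "\<lambda>s. F (q + s *\<^sub>R axis i 1)" _ 0 \<sigma>] by simp
qed

lemma has_derivative_along_two_axes:
  fixes F :: "real^'m::finite \<Rightarrow> real"
  assumes U: "open U" and p: "p \<in> U" and dF: "partially_differentiable_on U F"
    and c: "continuous_on U (pd b F)"
  shows "((\<lambda>(s, t). F (p + s *\<^sub>R axis a 1 + t *\<^sub>R axis b 1))
           has_derivative (\<lambda>(s, t). s * pd a F p + t * pd b F p)) (at (0, 0))"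
proof -
  obtain r where r: "r > 0" "ball p r \<subseteq> U" using U p open_contains_ball by blast
  define X where "X = ball (0::real) (r/2)"
  have X0: "0 \<in> X" using r by (simp add: X_def)
  have inU: "p + s *\<^sub>R axis a 1 + t *\<^sub>R axis b 1 \<in> U" if "s \<in> X" "t \<in> X" for s t
    using dist_add_axes_le[of p s a t b] that r by (force simp: X_def dist_commute)
  define \<psi> where "\<psi> s t = F (p + s *\<^sub>R axis a 1 + t *\<^sub>R axis b 1)" for s t
  define fy where "fy s t = blinfun_scaleR_left (pd b F (p + s *\<^sub>R axis a 1 + t *\<^sub>R axis b 1))" for s t
  have fx: "((\<lambda>s. \<psi> s 0) has_derivative (*) (pd a F p)) (at 0 within X)"
    using has_real_derivative_along_axis[OF dF, of p 0 a] p
    by (simp add: \<psi>_def has_field_derivative_def has_derivative_at_withinI)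
  have fy: "((\<lambda>t. \<psi> s t) has_derivative blinfun_apply (fy s t)) (at t within X)"
    if "s \<in> X" "t \<in> X" for s t
  proof -
    have "((\<lambda>u. F ((p + s *\<^sub>R axis a 1) + u *\<^sub>R axis b 1)) has_real_derivative
        pd b F ((p + s *\<^sub>R axis a 1) + t *\<^sub>R axis b 1)) (at t)"
      using inU[OF that] by (intro has_real_derivative_along_axis[OF dF]) simp
    moreover have "blinfun_apply (fy s t) = (*) (pd b F (p + s *\<^sub>R axis a 1 + t *\<^sub>R axis b 1))"
      by (auto simp: fy_def fun_eq_iff)
    ultimately show ?thesis
      unfolding \<psi>_def has_field_derivative_def by (simp add: has_derivative_at_withinI)
  qed
  have "continuous_on (X \<times> X) (\<lambda>z. pd b F (p + fst z *\<^sub>R axis a 1 + snd z *\<^sub>R axis b 1))"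
    by (rule continuous_on_compose2[OF c]) (auto intro!: continuous_intros inU)
  then have "continuous_on (X \<times> X) (\<lambda>(s, t). fy s t)"
    unfolding fy_def case_prod_beta by (intro continuous_intros)
  then have fy_cont: "continuous (at (0, 0) within X \<times> X) (\<lambda>(s, t). fy s t)"
    using X0 continuous_on_eq_continuous_within by blast
  have "((\<lambda>(s, t). \<psi> s t) has_derivative (\<lambda>(s, t). pd a F p * s + fy 0 0 t)) (at (0, 0) within X \<times> X)"
    using fx fy fy_cont X0 by (intro has_derivative_partialsI) (simp_all add: X_def)
  moreover have "at ((0::real), (0::real)) within X \<times> X = at (0, 0)"
    by (rule at_within_open) (use X0 in \<open>auto simp: X_def intro!: open_Times\<close>)
  moreover have "(\<lambda>(s, t). pd a F p * s + fy 0 0 t) = (\<lambda>(s, t). s * pd a F p + t * pd b F p)"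
    by (auto simp: fun_eq_iff fy_def)
  ultimately show ?thesis by (simp add: \<psi>_def)
qed

lemma has_real_derivative_along_axis_difference:
  fixes F :: "real^'m::finite \<Rightarrow> real"
  assumes "open U" "p \<in> U" "partially_differentiable_on U F" "continuous_on U (pd b F)"
  shows "((\<lambda>t. F (p + t *\<^sub>R axis a 1 - t *\<^sub>R axis b 1)) has_real_derivative (pd a F p - pd b F p)) (at 0)"
proof -
  have diag: "((\<lambda>t. (t, -t)) has_derivative (\<lambda>h. (h, -h))) (at (0::real))"
    by (auto intro!: derivative_eq_intros)
  have "((\<lambda>t. F (p + t *\<^sub>R axis a 1 + (-t) *\<^sub>R axis b 1)) has_derivative
      (\<lambda>h. h * pd a F p + (-h) * pd b F p)) (at 0)"
    using has_derivative_compose[OF diag, simplified, OF has_derivative_along_two_axes[OF assms]]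
    by simp
  moreover have "(\<lambda>h. h * pd a F p + (-h) * pd b F p) = (*) (pd a F p - pd b F p)"
    by (auto simp: fun_eq_iff algebra_simps)
  ultimately show ?thesis by (simp add: has_field_derivative_def)
qed

definition mixed_difference :: "(real^'m::finite \<Rightarrow> real) \<Rightarrow> real^'m \<Rightarrow> 'm \<Rightarrow> 'm \<Rightarrow> real \<Rightarrow> real" where
  "mixed_difference F p k l h =
     F (p + h *\<^sub>R axis k 1 + h *\<^sub>R axis l 1) - F (p + h *\<^sub>R axis k 1) - F (p + h *\<^sub>R axis l 1) + F p"

lemma mixed_difference_commute: "mixed_difference F p k l h = mixed_difference F p l k h"
  by (simp add: mixed_difference_def add_ac)

lemma mixed_difference_mvt:
  fixes F :: "real^'m::finite \<Rightarrow> real"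
  assumes dF: "partially_differentiable_on U F" and dk: "partially_differentiable_on U (pd k F)"
    and h: "h > 0"
    and box: "\<And>s t. 0 \<le> s \<Longrightarrow> s \<le> h \<Longrightarrow> 0 \<le> t \<Longrightarrow> t \<le> h \<Longrightarrow> p + s *\<^sub>R axis k 1 + t *\<^sub>R axis l 1 \<in> U"
  obtains \<sigma> \<tau> where "0 < \<sigma>" "\<sigma> < h" "0 < \<tau>" "\<tau> < h"
    "mixed_difference F p k l h = h * h * pd l (pd k F) (p + \<sigma> *\<^sub>R axis k 1 + \<tau> *\<^sub>R axis l 1)"
proof -
  define ek where "ek = (axis k 1 :: real^'m)"
  define el where "el = (axis l 1 :: real^'m)"
  define u where "u s = F ((p + h *\<^sub>R el) + s *\<^sub>R ek) - F (p + s *\<^sub>R ek)" for s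
  have "DERIV u s :> (pd k F ((p + h *\<^sub>R el) + s *\<^sub>R ek) - pd k F (p + s *\<^sub>R ek))"
    if "0 \<le> s" "s \<le> h" for s
  proof -
    have "(p + h *\<^sub>R el) + s *\<^sub>R ek \<in> U" "p + s *\<^sub>R ek \<in> U"
      using box[of s h] box[of s 0] that h by (simp_all add: ek_def el_def add_ac)
    then show ?thesis
      unfolding u_def ek_def by (intro DERIV_diff has_real_derivative_along_axis[OF dF])
  qed
  then obtain \<sigma> where \<sigma>: "0 < \<sigma>" "\<sigma> < h"
    "u h - u 0 = h * (pd k F ((p + h *\<^sub>R el) + \<sigma> *\<^sub>R ek) - pd k F (p + \<sigma> *\<^sub>R ek))"
    using MVT2[of 0 h u] h by fastforce
  define v where "v t = pd k F ((p + \<sigma> *\<^sub>R ek) + t *\<^sub>R el)" for t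
  have "DERIV v t :> pd l (pd k F) ((p + \<sigma> *\<^sub>R ek) + t *\<^sub>R el)" if "0 \<le> t" "t \<le> h" for t
    using box[of \<sigma> t] that \<sigma> unfolding v_def ek_def el_def
    by (intro has_real_derivative_along_axis[OF dk]) simp
  then obtain \<tau> where \<tau>: "0 < \<tau>" "\<tau> < h"
    "v h - v 0 = h * pd l (pd k F) ((p + \<sigma> *\<^sub>R ek) + \<tau> *\<^sub>R el)"
    using MVT2[of 0 h v] h by fastforce
  have "mixed_difference F p k l h = u h - u 0"
    by (simp add: mixed_difference_def u_def ek_def el_def add_ac)
  also have "\<dots> = h * (v h - v 0)"
    using \<sigma>(3) by (simp add: v_def add_ac)
  also have "\<dots> = h * h * pd l (pd k F) (p + \<sigma> *\<^sub>R axis k 1 + \<tau> *\<^sub>R axis l 1)"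
    using \<tau>(3) by (simp add: ek_def el_def)
  finally show ?thesis using \<sigma> \<tau> that by blast
qed

lemma mixed_difference_quotient_tendsto:
  fixes F :: "real^'m::finite \<Rightarrow> real"
  assumes U: "open U" and p: "p \<in> U"
    and dF: "partially_differentiable_on U F" and dk: "partially_differentiable_on U (pd k F)"
    and c: "continuous_on U (pd l (pd k F))"
  shows "((\<lambda>h. mixed_difference F p k l h / h\<^sup>2) \<longlongrightarrow> pd l (pd k F) p) (at_right 0)"
proof (rule tendstoI)
  fix \<epsilon> :: real
  assume "\<epsilon> > 0"
  obtain r where r: "r > 0" "ball p r \<subseteq> U" using U p open_contains_ball by blast
  have "isCont (pd l (pd k F)) p" using c U p continuous_on_eq_continuous_at by blast
  then obtain \<delta> where \<delta>: "\<delta> > 0"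
    "\<And>y. dist y p < \<delta> \<Longrightarrow> dist (pd l (pd k F) y) (pd l (pd k F) p) < \<epsilon>"
    using \<open>\<epsilon> > 0\<close> unfolding continuous_at_eps_delta by blast
  have "dist (mixed_difference F p k l h / h\<^sup>2) (pd l (pd k F) p) < \<epsilon>"
    if h: "0 < h" "h < min r \<delta> / 2" for h
  proof -
    have near: "dist (p + s *\<^sub>R axis k 1 + t *\<^sub>R axis l 1) p < min r \<delta>"
      if "0 \<le> s" "s \<le> h" "0 \<le> t" "t \<le> h" for s t
      using dist_add_axes_le[of p s k t l] that h by linarith
    then have "p + s *\<^sub>R axis k 1 + t *\<^sub>R axis l 1 \<in> U"
      if "0 \<le> s" "s \<le> h" "0 \<le> t" "t \<le> h" for s t
      using that r by (force simp: dist_commute)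
    then obtain \<sigma> \<tau> where st: "0 < \<sigma>" "\<sigma> < h" "0 < \<tau>" "\<tau> < h"
      "mixed_difference F p k l h = h * h * pd l (pd k F) (p + \<sigma> *\<^sub>R axis k 1 + \<tau> *\<^sub>R axis l 1)"
      using mixed_difference_mvt[OF dF dk \<open>0 < h\<close>] by blast
    then show ?thesis
      using \<delta>(2) near[of \<sigma> \<tau>] h by (simp add: power2_eq_square)
  qed
  then show "\<forall>\<^sub>F h in at_right 0. dist (mixed_difference F p k l h / h\<^sup>2) (pd l (pd k F) p) < \<epsilon>"
    unfolding eventually_at_right_field using r \<delta> by (intro exI[of _ "min r \<delta> / 2"]) auto
qed

lemma pd_pd_commute:
  fixes F :: "real^'m::finite \<Rightarrow> real"
  assumes "open U" "p \<in> U" "partially_differentiable_on U F"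
    "partially_differentiable_on U (pd k F)" "partially_differentiable_on U (pd l F)"
    "continuous_on U (pd l (pd k F))" "continuous_on U (pd k (pd l F))"
  shows "pd l (pd k F) p = pd k (pd l F) p"
proof (rule tendsto_unique[OF trivial_limit_at_right_real])
  show "((\<lambda>h. mixed_difference F p k l h / h\<^sup>2) \<longlongrightarrow> pd l (pd k F) p) (at_right 0)"
    using assms by (intro mixed_difference_quotient_tendsto)
  show "((\<lambda>h. mixed_difference F p k l h / h\<^sup>2) \<longlongrightarrow> pd k (pd l F) p) (at_right 0)"
    unfolding mixed_difference_commute[of F p k l]
    using assms by (intro mixed_difference_quotient_tendsto)
qed

lemma smooth_on_pd_pd_commute:
  assumes F: "smooth_on U F" and "p \<in> U"
  shows "pd l (pd k F) p = pd k (pd l F) p"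
  using smooth_onD(3)[OF F, of "[]"] smooth_onD(3)[OF F, of "[k]"] smooth_onD(3)[OF F, of "[l]"]
    smooth_onD(2)[OF F, of "[l, k]"] smooth_onD(2)[OF F, of "[k, l]"]
  by (intro pd_pd_commute[OF smooth_onD(1)[OF F] \<open>p \<in> U\<close>]) simp_all

lemma lift_None [simp]: "lift x $ None = 1 - (\<Sum>j\<in>UNIV. x$j)"
  by (simp add: lift_def)

lemma lift_Some [simp]: "lift x $ Some i = x $ i"
  by (simp add: lift_def)

lemma lift_add_axis:
  "lift (y + t *\<^sub>R axis i 1) = lift y + t *\<^sub>R axis (Some i) 1 - t *\<^sub>R axis None (1::real)"
proof -
  have "(\<Sum>j\<in>UNIV. t * (if j = i then 1 else 0)) = (t::real)"
    by (simp add: sum_distrib_left[symmetric])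
  then show ?thesis
    by (auto simp: vec_eq_iff lift_def axis_def sum.distrib split: option.split)
qed

lemma eventually_lift_add_axis_in:
  fixes x :: "real^('n::finite)"
  assumes "open U" and "lift x \<in> U"
  shows "\<forall>\<^sub>F t in nhds 0. lift (x + t *\<^sub>R axis i 1) \<in> U"
proof -
  have "isCont (\<lambda>t. lift (x + t *\<^sub>R axis i 1)) 0"
    unfolding lift_add_axis by (intro continuous_intros)
  then have "((\<lambda>t. lift (x + t *\<^sub>R axis i 1)) \<longlongrightarrow> lift x) (nhds 0)"
    using tendsto_at_iff_tendsto_nhds[of "\<lambda>t. lift (x + t *\<^sub>R axis i 1)" 0] by (simp add: isCont_def)
  from topological_tendstoD[OF this assms] show ?thesis .
qed

lemma has_real_derivative_comp_lift:
  fixes F :: "real^('n::finite option) \<Rightarrow> real"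
  assumes "open U" "lift y \<in> U" "partially_differentiable_on U F" "continuous_on U (pd None F)"
  shows "((\<lambda>t. F (lift (y + t *\<^sub>R axis i 1))) has_real_derivative
           (pd (Some i) F (lift y) - pd None F (lift y))) (at 0)"
  unfolding lift_add_axis by (rule has_real_derivative_along_axis_difference[OF assms])

lemma pd_comp_lift:
  fixes F :: "real^('n::finite option) \<Rightarrow> real"
  assumes "open U" "lift y \<in> U" "partially_differentiable_on U F" "continuous_on U (pd None F)"
  shows "pd i (\<lambda>y. F (lift y)) y = pd (Some i) F (lift y) - pd None F (lift y)"
  unfolding pd_def[of i] using DERIV_imp_deriv[OF has_real_derivative_comp_lift[OF assms]] by simp

lemma pd_pd_comp_lift:
  fixes F :: "real^('n::finite option) \<Rightarrow> real"
  assumes F: "smooth_on U F" and x: "lift x \<in> U"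
  shows "pd i (pd j (\<lambda>y. F (lift y))) x =
      pd (Some i) (pd (Some j) F) (lift x) - pd None (pd (Some j) F) (lift x)
      - pd (Some i) (pd None F) (lift x) + pd None (pd None F) (lift x)"
proof -
  note U = smooth_onD(1)[OF F]
  have dF: "partially_differentiable_on U F" and dF': "partially_differentiable_on U (pd k F)"
    and cF': "continuous_on U (pd k F)" and cF'': "continuous_on U (pd k (pd l F))" for k l
    using smooth_onD(2,3)[OF F, of "[]"] smooth_onD(2,3)[OF F, of "[k]"] smooth_onD(2)[OF F, of "[k, l]"]
    by simp_all
  have eq: "\<forall>\<^sub>F t in nhds 0. pd j (\<lambda>y. F (lift y)) (x + t *\<^sub>R axis i 1)
      = pd (Some j) F (lift (x + t *\<^sub>R axis i 1)) - pd None F (lift (x + t *\<^sub>R axis i 1))"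
    using eventually_lift_add_axis_in[OF U x, of i]
    by eventually_elim (rule pd_comp_lift[OF U _ dF cF'])
  have "((\<lambda>t. pd (Some j) F (lift (x + t *\<^sub>R axis i 1)) - pd None F (lift (x + t *\<^sub>R axis i 1)))
      has_real_derivative
        (pd (Some i) (pd (Some j) F) (lift x) - pd None (pd (Some j) F) (lift x))
        - (pd (Some i) (pd None F) (lift x) - pd None (pd None F) (lift x))) (at 0)"
    by (intro DERIV_diff has_real_derivative_comp_lift[OF U x] dF' cF'')
  then have "((\<lambda>t. pd j (\<lambda>y. F (lift y)) (x + t *\<^sub>R axis i 1)) has_real_derivative
        (pd (Some i) (pd (Some j) F) (lift x) - pd None (pd (Some j) F) (lift x))
        - (pd (Some i) (pd None F) (lift x) - pd None (pd None F) (lift x))) (at 0)"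
    using DERIV_cong_ev[OF refl eq refl] by blast
  then show ?thesis unfolding pd_def[of i] by (simp add: DERIV_imp_deriv)
qed

lemma sum_pairs_less:
  fixes w :: "'k::{finite,linorder} \<Rightarrow> 'k \<Rightarrow> 'a::ab_group_add"
  shows "(\<Sum>(i,j)\<in>{(i,j). i < j}. w i j + w j i) = (\<Sum>i\<in>UNIV. \<Sum>j\<in>UNIV. w i j) - (\<Sum>i\<in>UNIV. w i i)"
proof -
  define A where "A = {(i::'k,j). i < j}"
  define B where "B = {(i::'k,j). j < i}"
  define D where "D = {(i::'k,j). i = j}"
  have UNIV_split: "(UNIV :: ('k \<times> 'k) set) = (A \<union> B) \<union> D"
    by (auto simp: A_def B_def D_def)
  have "(\<Sum>i\<in>UNIV. \<Sum>j\<in>UNIV. w i j) = (\<Sum>(i,j)\<in>UNIV. w i j)"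
    by (simp add: sum.cartesian_product)
  also have "\<dots> = (\<Sum>(i,j)\<in>A. w i j) + (\<Sum>(i,j)\<in>B. w i j) + (\<Sum>(i,j)\<in>D. w i j)"
    unfolding UNIV_split
    by (subst sum.union_disjoint, simp, simp, force simp: A_def B_def D_def)
       (subst sum.union_disjoint, auto simp: A_def B_def D_def)
  also have "(\<Sum>(i,j)\<in>B. w i j) = (\<Sum>(i,j)\<in>A. w j i)"
    by (rule sum.reindex_bij_witness[where i=prod.swap and j=prod.swap]) (auto simp: A_def B_def)
  also have "(\<Sum>(i,j)\<in>D. w i j) = (\<Sum>i\<in>UNIV. w i i)"
    by (rule sum.reindex_bij_witness[where i="\<lambda>i. (i,i)" and j=fst]) (auto simp: D_def)
  finally show ?thesis
    by (simp add: A_def sum.distrib split_beta)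
qed

lemma sum_pairs_less_symmetric:
  fixes y :: "'k::{finite,linorder} \<Rightarrow> real"
  assumes sym: "\<And>i j. G i j = G j i"
  shows "(\<Sum>(i,j)\<in>{(i,j). i < j}. y i * y j * G i j) =
      ((\<Sum>i\<in>UNIV. \<Sum>j\<in>UNIV. y i * y j * G i j) - (\<Sum>i\<in>UNIV. y i * y i * G i i)) / 2"
proof -
  have half: "y i * y j * G i j = (y i * y j * G i j + y j * y i * G j i) / 2" for i j
    using sym[of j i] by simp
  have "(\<Sum>(i,j)\<in>{(i,j). i < j}. y i * y j * G i j)
      = (\<Sum>(i,j)\<in>{(i,j). i < j}. (y i * y j * G i j + y j * y i * G j i) / 2)"
    by (rule sum.cong[OF refl], clarify, rule half)
  also have "\<dots> = (\<Sum>(i,j)\<in>{(i,j). i < j}. y i * y j * G i j + y j * y i * G j i) / 2"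
    by (simp only: sum_divide_distrib split_def)
  finally have "(\<Sum>(i,j)\<in>{(i,j). i < j}. y i * y j * G i j)
      = (\<Sum>(i,j)\<in>{(i,j). i < j}. y i * y j * G i j + y j * y i * G j i) / 2" .
  then show ?thesis by (simp only: sum_pairs_less)
qed

lemma sum_diag_minus_sum_pairs_less:
  fixes y :: "'k::{finite,linorder} \<Rightarrow> real"
  assumes sym: "\<And>i j. G i j = G j i"
  shows "(\<Sum>i\<in>UNIV. (1/2) * y i * (1 - y i) * G i i) - (\<Sum>(i,j)\<in>{(i,j). i < j}. y i * y j * G i j)
      = ((\<Sum>i\<in>UNIV. y i * G i i) - (\<Sum>i\<in>UNIV. \<Sum>j\<in>UNIV. y i * y j * G i j)) / 2"
proof -
  have "(\<Sum>i\<in>UNIV. (1/2) * y i * (1 - y i) * G i i) = (\<Sum>i\<in>UNIV. (y i * G i i - y i * y i * G i i) / 2)"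
    by (rule sum.cong) (simp_all add: algebra_simps)
  also have "\<dots> = ((\<Sum>i\<in>UNIV. y i * G i i) - (\<Sum>i\<in>UNIV. y i * y i * G i i)) / 2"
    by (simp add: sum_subtractf flip: sum_divide_distrib)
  finally show ?thesis
    using sum_pairs_less_symmetric[of G y, OF sym] by (simp add: field_simps)
qed

lemma sum_pairs_less_second_difference:
  fixes y :: "'k::{finite,linorder} \<Rightarrow> 'a::comm_ring"
  shows "(\<Sum>(i,j)\<in>{(i,j). i < j}. y i * y j * (a i i - a i j - a j i + a j j)) =
      (\<Sum>k\<in>UNIV. y k) * (\<Sum>k\<in>UNIV. y k * a k k) - (\<Sum>k\<in>UNIV. \<Sum>l\<in>UNIV. y k * y l * a k l)"
proof -
  define w where "w k l = y k * y l * (a k k - a k l)" for k l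
  have "(\<Sum>(i,j)\<in>{(i,j). i < j}. y i * y j * (a i i - a i j - a j i + a j j))
      = (\<Sum>(i,j)\<in>{(i,j). i < j}. w i j + w j i)"
    by (rule sum.cong) (auto simp: w_def algebra_simps)
  also have "\<dots> = (\<Sum>k\<in>UNIV. \<Sum>l\<in>UNIV. w k l)"
    by (simp add: sum_pairs_less w_def)
  also have "\<dots> = (\<Sum>k\<in>UNIV. y k) * (\<Sum>k\<in>UNIV. y k * a k k) - (\<Sum>k\<in>UNIV. \<Sum>l\<in>UNIV. y k * y l * a k l)"
  proof -
    have "(\<Sum>k\<in>UNIV. \<Sum>l\<in>UNIV. y k * y l * a k k) = (\<Sum>k\<in>UNIV. y k) * (\<Sum>k\<in>UNIV. y k * a k k)"
      unfolding sum_product by (subst sum.swap) (simp add: mult_ac)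
    then show ?thesis by (simp add: w_def right_diff_distrib sum_subtractf)
  qed
  finally show ?thesis .
qed

lemma sum_pairs_less_difference_product:
  fixes y :: "'k::{finite,linorder} \<Rightarrow> 'a::comm_ring_1"
  shows "(\<Sum>(i,j)\<in>{(i,j). i < j}. (y i - y j) * (b i - b j)) =
      of_nat CARD('k) * (\<Sum>k\<in>UNIV. y k * b k) - (\<Sum>k\<in>UNIV. y k) * (\<Sum>k\<in>UNIV. b k)"
proof -
  define w where "w k l = (y k - y l) * b k" for k l
  have "(\<Sum>(i,j)\<in>{(i,j). i < j}. (y i - y j) * (b i - b j)) = (\<Sum>(i,j)\<in>{(i,j). i < j}. w i j + w j i)"
    by (rule sum.cong) (auto simp: w_def algebra_simps)
  also have "\<dots> = (\<Sum>k\<in>UNIV. \<Sum>l\<in>UNIV. w k l)"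
    by (simp add: sum_pairs_less w_def)
  also have "\<dots> = of_nat CARD('k) * (\<Sum>k\<in>UNIV. y k * b k) - (\<Sum>k\<in>UNIV. y k) * (\<Sum>k\<in>UNIV. b k)"
  proof -
    have "(\<Sum>l\<in>UNIV. w k l) = (of_nat CARD('k) * y k - (\<Sum>l\<in>UNIV. y l)) * b k" for k
      by (simp add: w_def sum_subtractf flip: sum_distrib_right)
    then show ?thesis
      by (simp add: left_diff_distrib sum_subtractf sum_distrib_left mult.assoc)
  qed
  finally show ?thesis .
qed

lemma sum_UNIV_option:
  "(\<Sum>k\<in>UNIV. f k) = f None + (\<Sum>i\<in>UNIV. f (Some i))"
  for f :: "'n::finite option \<Rightarrow> 'a::comm_monoid_add"
  by (simp add: UNIV_option_conv sum.reindex)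

lemma sum_lift_mult:
  "(\<Sum>k\<in>UNIV. lift x $ k * c k) = c None + (\<Sum>i\<in>UNIV. x$i * (c (Some i) - c None))"
  by (simp add: sum_UNIV_option algebra_simps sum_subtractf sum_distrib_left sum_distrib_right)

lemma sum_lift: "(\<Sum>k\<in>UNIV. lift x $ k) = 1"
  using sum_lift_mult[of x "\<lambda>_. 1"] by simp

lemma sum_sum_lift_mult:
  fixes a :: "'n::finite option \<Rightarrow> 'n option \<Rightarrow> real"
  assumes sym: "\<And>k l. a k l = a l k"
  shows "(\<Sum>k\<in>UNIV. \<Sum>l\<in>UNIV. lift x $ k * lift x $ l * a k l) =
      a None None + 2 * (\<Sum>i\<in>UNIV. x$i * (a (Some i) None - a None None))
      + (\<Sum>i\<in>UNIV. \<Sum>j\<in>UNIV. x$i * x$j * (a (Some i) (Some j) - a None (Some j) - a (Some i) None + a None None))"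
proof -
  define c where "c k = a k None + (\<Sum>j\<in>UNIV. x$j * (a k (Some j) - a k None))" for k
  have "(\<Sum>k\<in>UNIV. \<Sum>l\<in>UNIV. lift x $ k * lift x $ l * a k l) = (\<Sum>k\<in>UNIV. lift x $ k * c k)"
    by (simp add: c_def sum_lift_mult[symmetric] sum_distrib_left mult.assoc)
  also have "\<dots> = c None + (\<Sum>i\<in>UNIV. x$i * (c (Some i) - c None))"
    by (rule sum_lift_mult)
  also have "\<dots> = a None None + 2 * (\<Sum>i\<in>UNIV. x$i * (a (Some i) None - a None None))
      + (\<Sum>i\<in>UNIV. \<Sum>j\<in>UNIV. x$i * x$j * (a (Some i) (Some j) - a None (Some j) - a (Some i) None + a None None))"
    using sym[of None "Some _"]
    by (simp add: c_def algebra_simps sum.distrib sum_subtractf sum_distrib_left)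
  finally show ?thesis .
qed

lemma generator_identity_on_simplex:
  fixes x :: "real^('n::{finite,linorder})"
    and a :: "'n option \<Rightarrow> 'n option \<Rightarrow> real" and b :: "'n option \<Rightarrow> real"
  assumes sym: "\<And>k l. a k l = a l k"
  shows "(1/2) * (\<Sum>(i,j)\<in>{(i,j). i < j}. lift x$i * lift x$j * (a i i - a i j - a j i + a j j))
       - (m/4) * (\<Sum>(i,j)\<in>{(i,j). i < j}. (lift x$i - lift x$j) * (b i - b j))
     = (\<Sum>i\<in>UNIV. (1/2) * x$i * (1 - x$i) *
           (a (Some i) (Some i) - a None (Some i) - a (Some i) None + a None None))
       - (\<Sum>(i,j)\<in>{(i,j). i < j}. x$i * x$j *
           (a (Some i) (Some j) - a None (Some j) - a (Some i) None + a None None))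
       + (m/4) * (\<Sum>i\<in>UNIV. (1 - (real CARD('n) + 1) * x$i) * (b (Some i) - b None))"
proof -
  define G where "G i j = a (Some i) (Some j) - a None (Some j) - a (Some i) None + a None None" for i j
  define A where "A = (\<Sum>i\<in>UNIV. x$i * (a (Some i) (Some i) - a None None))"
  define C where "C = (\<Sum>i\<in>UNIV. x$i * (a (Some i) None - a None None))"
  define Q where "Q = (\<Sum>i\<in>UNIV. \<Sum>j\<in>UNIV. x$i * x$j * G i j)"
  define B where "B = (\<Sum>i\<in>UNIV. x$i * (b (Some i) - b None))"
  define n where "n = real CARD('n)"
  have G_sym: "G i j = G j i" for i j
    using sym[of "Some i" "Some j"] sym[of None "Some i"] sym[of None "Some j"] by (simp add: G_def)
  have bep_diffusion:
    "(\<Sum>(i,j)\<in>{(i,j). i < j}. lift x$i * lift x$j * (a i i - a i j - a j i + a j j)) = A - 2 * C - Q"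
    using sum_pairs_less_second_difference[of "($) (lift x)" a] sum_lift[of x]
      sum_lift_mult[of x "\<lambda>k. a k k"] sum_sum_lift_mult[OF sym, of x]
    by (simp add: A_def C_def Q_def G_def)
  have wf_diffusion: "(\<Sum>i\<in>UNIV. (1/2) * x$i * (1 - x$i) * G i i)
      - (\<Sum>(i,j)\<in>{(i,j). i < j}. x$i * x$j * G i j) = (A - 2 * C - Q) / 2"
  proof -
    have "(\<Sum>i\<in>UNIV. x$i * G i i) = A - 2 * C"
      using sym[of None "Some _"]
      by (simp add: G_def A_def C_def algebra_simps sum.distrib sum_subtractf sum_distrib_left)
    then show ?thesis
      using sum_diag_minus_sum_pairs_less[of G "($) x", OF G_sym] by (simp add: Q_def)
  qed
  have bep_drift: "(\<Sum>(i,j)\<in>{(i,j). i < j}. (lift x$i - lift x$j) * (b i - b j))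
      = (n + 1) * (b None + B) - (b None + (\<Sum>i\<in>UNIV. b (Some i)))"
    using sum_pairs_less_difference_product[of "($) (lift x)" b] sum_lift[of x] sum_lift_mult[of x b]
    by (simp add: B_def n_def sum_UNIV_option)
  have wf_drift: "(\<Sum>i\<in>UNIV. (1 - (n + 1) * x$i) * (b (Some i) - b None))
      = (\<Sum>i\<in>UNIV. b (Some i)) - n * b None - (n + 1) * B"
    by (simp add: B_def n_def algebra_simps sum.distrib sum_subtractf sum_distrib_left)
  have "(1/2) * (\<Sum>(i,j)\<in>{(i,j). i < j}. lift x$i * lift x$j * (a i i - a i j - a j i + a j j))
       - (m/4) * (\<Sum>(i,j)\<in>{(i,j). i < j}. (lift x$i - lift x$j) * (b i - b j))
     = (A - 2 * C - Q) / 2 + (m/4) * ((\<Sum>i\<in>UNIV. b (Some i)) - n * b None - (n + 1) * B)"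
    unfolding bep_diffusion bep_drift by (simp add: field_simps)
  also have "\<dots> = (\<Sum>i\<in>UNIV. (1/2) * x$i * (1 - x$i) * G i i)
       - (\<Sum>(i,j)\<in>{(i,j). i < j}. x$i * x$j * G i j)
       + (m/4) * (\<Sum>i\<in>UNIV. (1 - (n + 1) * x$i) * (b (Some i) - b None))"
    unfolding wf_diffusion wf_drift ..
  finally show ?thesis unfolding G_def n_def .
qed

theorem proposition5p3:
  fixes m :: real
    and f :: "real^(('n::{finite,linorder}) option) \<Rightarrow> real"
    and U :: "(real^(('n::{finite,linorder}) option)) set"
    and x :: "real^('n::{finite,linorder})"
  assumes "smooth_on U f"
    and "{y. \<forall>i. 0 \<le> y$i} \<subseteq> U"
    and "\<forall>i. 0 \<le> x$i"
    and "(\<Sum>j\<in>UNIV. x$j) \<le> 1"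
  shows "L_BEP m f (lift x) =
         L_WF (m/4 * (real CARD('n option) - 1)) (\<lambda>y. f (lift y)) x"
proof -
  have "0 \<le> lift x $ k" for k
    using assms(3,4) by (cases k) simp_all
  then have x: "lift x \<in> U"
    using assms(2) by blast
  have pd_lift: "pd i (\<lambda>y. f (lift y)) x = pd (Some i) f (lift x) - pd None f (lift x)" for i
    using smooth_onD(3)[OF assms(1), of "[]"] smooth_onD(2)[OF assms(1), of "[None]"]
    by (intro pd_comp_lift[OF smooth_onD(1)[OF assms(1)] x]) simp_all
  have rate: "(m/4 * (real CARD('n option) - 1)) / real CARD('n) = m/4"
    by simp
  show ?thesis
    unfolding L_BEP_def L_WF_def pd_lift pd_pd_comp_lift[OF assms(1) x] rate
    by (rule generator_identity_on_simplex[where a = "\<lambda>k l. pd k (pd l f) (lift x)"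
          and b = "\<lambda>k. pd k f (lift x)", OF smooth_on_pd_pd_commute[OF assms(1) x]])
qed

end
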